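(* For every positive integer $n$, \[ \sum_{k=1}^{n}(8k+1)\frac{(\tfrac{1}{2})_k(\tfrac{1}{4})_k(\tfrac{3}{4})_k}{k!^3}\frac{(\tfrac{1}{2}+n)_k(-n)_k}{(\tfrac{3}{2}+3n)_k(-3n)_k}\sum_{i=1}^{k}\left\{\frac{1}{(2i-1)^2}-\frac{1}{36i^2}\right\} =\frac{1}{9}\,\frac{(\tfrac{1}{2})_n^2(\tfrac{5}{6})_n(\tfrac{7}{6})_n}{n!^2(\tfrac{1}{3})_n(\tfrac{2}{3})_n}\sum_{j=1}^{2n}\frac{(-1)^{j-1}}{j^2}. \]
   Context: For a complex number $x$ and a nonnegative integer $n$, $(x)_n=x(x+1)\cdots(x+n-1)$ denotes the shifted factorial (Pochhammer symbol), with $(x)_0=1$. *)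

theory Defs
  imports Complex_Main
begin

end

theory Submission
  imports Defs
begin

text \<open>
  A Wilf-Zeilberger argument. Let F(n,k) = (8k+1) a(k) b(n,k) / c(n), where a(k), b(n,k) and c(n)
  are the three hypergeometric factors of the statement, and E(n,k) = H(k) - A(n)/9, where H(k) and
  A(n) are the inner sums on the left and on the right. With explicit rational certificates R and S,
  the functions G(n,k) = F(n+1,k) R(n,k) and G'(n,k) = F(n+1,k) (R(n,k) E(n+1,k) - S(n,k)) satisfy
  F(n+1,k) - F(n,k) = G(n,k+1) - G(n,k) and
  F(n+1,k) E(n+1,k) - F(n,k) E(n,k) = G'(n,k+1) - G'(n,k) for 0 <= k <= n+1.
  As F(n,n+1) = 0 and G, G' vanish at k = 0 and k = n+2, summing over k shows that
  sum_k F(n,k) and sum_k F(n,k) E(n,k) do not depend on n; at n = 1 they are 1 and 0.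
  Since H(k) = E(n,k) + A(n)/9, the left-hand side equals c(n) (0 + A(n)/9).
\<close>

section \<open>Pochhammer symbols and telescoping\<close>

lemma pochhammer_shift:
  fixes x :: "'a::comm_semiring_1"
  shows "pochhammer x k * pochhammer (x + of_nat k) m
       = pochhammer (x + of_nat m) k * pochhammer x m"
  using pochhammer_product'[of x k m] pochhammer_product'[of x m k]
  by (simp add: add.commute mult.commute)

lemma pochhammer_shift_up:
  fixes x :: "'a::field"
  assumes "pochhammer (x + of_nat k) m \<noteq> 0"
  shows "pochhammer x k
       = pochhammer (x + of_nat m) k * (pochhammer x m / pochhammer (x + of_nat k) m)"
  using pochhammer_shift[of x k m] assms by (simp add: field_simps)

lemma pochhammer_shift_down:
  fixes x :: "'a::field"
  assumes "pochhammer x m \<noteq> 0"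
  shows "pochhammer (x + of_nat m) k
       = pochhammer x k * (pochhammer (x + of_nat k) m / pochhammer x m)"
  using pochhammer_shift[of x k m] assms by (simp add: field_simps)

lemma pochhammer_3: "pochhammer x 3 = x * (x + 1) * (x + 2)"
  by (simp add: pochhammer_Suc numeral_3_eq_3)

lemma divide_eq_divide_by_common_factor:
  fixes x y a b c :: "'a::field"
  assumes "x = c * a" "y = c * b" "c \<noteq> 0"
  shows "x / y = a / b"
  using assms by simp

lemma divide_mult_eq_by_cofactor:
  fixes x y a c g D :: "'a::field"
  assumes "x = g * a" "y * c = g * D" "g \<noteq> 0" "y \<noteq> 0"
  shows "x / y * D = a * c"
proof -
  have "x / y * D = g * a * (y * c / g) / y" using assms by simp
  also have "\<dots> = a * c" using assms by (simp add: field_simps)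
  finally show ?thesis .
qed

lemma sum_atMost_Suc_eq_by_telescoping:
  fixes f g h :: "nat \<Rightarrow> 'a::ab_group_add"
  assumes "\<And>k. k \<le> Suc n \<Longrightarrow> g k - f k = h (Suc k) - h k"
    and "f (Suc n) = 0" "h 0 = 0" "h (Suc (Suc n)) = 0"
  shows "(\<Sum>k\<le>Suc n. g k) = (\<Sum>k\<le>n. f k)"
proof -
  have "(\<Sum>k\<le>Suc n. g k) = (\<Sum>k\<le>Suc n. f k + (h (Suc k) - h k))"
    by (rule sum.cong) (auto simp: assms(1)[symmetric])
  also have "\<dots> = (\<Sum>k\<le>Suc n. f k) + (\<Sum>k<Suc (Suc n). h (Suc k) - h k)"
    by (simp add: sum.distrib lessThan_Suc_atMost)
  also have "\<dots> = (\<Sum>k\<le>n. f k)"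
    using assms(2-4) by (simp add: sum_lessThan_telescope)
  finally show ?thesis .
qed

section \<open>The summand and its ratios\<close>

definition ramanujan_coeff :: "nat \<Rightarrow> real" where
  "ramanujan_coeff k = pochhammer (1/2) k * pochhammer (1/4) k * pochhammer (3/4) k / (fact k) ^ 3"

definition truncation_factor :: "nat \<Rightarrow> nat \<Rightarrow> real" where
  "truncation_factor n k = pochhammer (1/2 + real n) k * pochhammer (- real n) k
     / (pochhammer (3/2 + 3 * real n) k * pochhammer (- 3 * real n) k)"

definition closed_form :: "nat \<Rightarrow> real" where
  "closed_form n = (pochhammer (1/2) n) ^ 2 * pochhammer (5/6) n * pochhammer (7/6) n
     / ((fact n) ^ 2 * pochhammer (1/3) n * pochhammer (2/3) n)"

definition harmonic_sum :: "nat \<Rightarrow> real" where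
  "harmonic_sum k = (\<Sum>i=1..k. 1 / (2 * real i - 1) ^ 2 - 1 / (36 * (real i) ^ 2))"

definition alternating_sum :: "nat \<Rightarrow> real" where
  "alternating_sum n = (\<Sum>j=1..2*n. (-1) ^ (j - 1) / (real j) ^ 2)"

lemma ramanujan_coeff_Suc:
  "ramanujan_coeff (Suc k) = ramanujan_coeff k
     * ((2 * real k + 1) * (4 * real k + 1) * (4 * real k + 3) / (32 * (real k + 1) ^ 3))"
proof -
  have "ramanujan_coeff (Suc k) = ramanujan_coeff k
          * ((1/2 + real k) * (1/4 + real k) * (3/4 + real k) / (1 + real k) ^ 3)"
    unfolding ramanujan_coeff_def pochhammer_Suc fact_Suc of_nat_mult of_nat_Suc power_mult_distrib
    by (simp only: divide_inverse inverse_mult_distrib mult_ac)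
  also have "\<dots> = ramanujan_coeff k
      * ((2 * real k + 1) * (4 * real k + 1) * (4 * real k + 3) / (32 * (real k + 1) ^ 3))"
    by (rule arg_cong[where f = "(*) _"], rule divide_eq_divide_by_common_factor[where c = "1/32"])
      (algebra, algebra, simp)
  finally show ?thesis .
qed

lemma truncation_factor_Suc:
  "truncation_factor m (Suc k) = truncation_factor m k
     * ((2 * real m + 2 * real k + 1) * (real k - real m)
        / ((6 * real m + 2 * real k + 3) * (real k - 3 * real m)))"
proof -
  have "truncation_factor m (Suc k) = truncation_factor m k
          * ((1/2 + real m + real k) * (- real m + real k)
             / ((3/2 + 3 * real m + real k) * (- 3 * real m + real k)))"
    unfolding truncation_factor_def pochhammer_Suc
    by (simp only: divide_inverse inverse_mult_distrib mult_ac)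
  also have "\<dots> = truncation_factor m k
      * ((2 * real m + 2 * real k + 1) * (real k - real m)
         / ((6 * real m + 2 * real k + 3) * (real k - 3 * real m)))"
    by (rule arg_cong[where f = "(*) _"], rule divide_eq_divide_by_common_factor[where c = "1/2"])
      (algebra, algebra, simp)
  finally show ?thesis .
qed

definition truncation_ratio :: "real \<Rightarrow> real \<Rightarrow> real" where
  "truncation_ratio n k =
     (1/2 + n) / (1/2 + n + k)
     * ((- (1 + n) + k) / - (1 + n))
     * ((3/2 + 3 * n + k) * (3/2 + 3 * n + k + 1) * (3/2 + 3 * n + k + 2)
        / ((3/2 + 3 * n) * (3/2 + 3 * n + 1) * (3/2 + 3 * n + 2)))
     * ((- 3 * (1 + n)) * (- 3 * (1 + n) + 1) * (- 3 * (1 + n) + 2)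
        / ((- 3 * (1 + n) + k) * (- 3 * (1 + n) + k + 1) * (- 3 * (1 + n) + k + 2)))"

lemma truncation_factor_Suc_left:
  "truncation_factor n k = truncation_factor (Suc n) k * truncation_ratio (real n) (real k)"
proof -
  have p1: "pochhammer (1/2 + real n) k = pochhammer (1/2 + real (Suc n)) k
              * ((1/2 + real n) / (1/2 + real n + real k))"
    using pochhammer_shift_up[of "1/2 + real n" k 1] by simp
  have p2: "pochhammer (- real n) k = pochhammer (- real (Suc n)) k
              * ((- real (Suc n) + real k) / - real (Suc n))"
    using pochhammer_shift_down[of "- real (Suc n)" 1 k] by simp
  have p3: "pochhammer (3/2 + 3 * real n) k = pochhammer (3/2 + 3 * real (Suc n)) k
              * ((3/2 + 3 * real n) * (3/2 + 3 * real n + 1) * (3/2 + 3 * real n + 2)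
                 / ((3/2 + 3 * real n + real k) * (3/2 + 3 * real n + real k + 1)
                    * (3/2 + 3 * real n + real k + 2)))"
    using pochhammer_shift_up[of "3/2 + 3 * real n" k 3] unfolding pochhammer_3 by simp
  have p4: "pochhammer (- 3 * real n) k = pochhammer (- 3 * real (Suc n)) k
              * ((- 3 * real (Suc n) + real k) * (- 3 * real (Suc n) + real k + 1)
                 * (- 3 * real (Suc n) + real k + 2)
                 / ((- 3 * real (Suc n)) * (- 3 * real (Suc n) + 1) * (- 3 * real (Suc n) + 2)))"
    using pochhammer_shift_down[of "- 3 * real (Suc n)" 3 k] unfolding pochhammer_3 by simp
  show ?thesis
    unfolding truncation_factor_def truncation_ratio_def p1 p2 p3 p4 of_nat_Suc
    by (simp only: divide_inverse inverse_mult_distrib inverse_inverse_eq mult_ac)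
qed

lemma closed_form_pos: "closed_form n > 0"
  unfolding closed_form_def
  by (intro divide_pos_pos mult_pos_pos zero_less_power pochhammer_pos) auto

lemma closed_form_Suc:
  "closed_form (Suc n) = closed_form n
     * ((2 * real n + 1) ^ 2 * (6 * real n + 5) * (6 * real n + 7)
        / (16 * (real n + 1) ^ 2 * (3 * real n + 1) * (3 * real n + 2)))"
proof -
  have "closed_form (Suc n) = closed_form n
          * ((1/2 + real n) ^ 2 * (5/6 + real n) * (7/6 + real n)
             / ((1 + real n) ^ 2 * (1/3 + real n) * (2/3 + real n)))"
    unfolding closed_form_def pochhammer_Suc fact_Suc of_nat_mult of_nat_Suc power_mult_distrib
    by (simp only: divide_inverse inverse_mult_distrib mult_ac)
  also have "\<dots> = closed_form n
      * ((2 * real n + 1) ^ 2 * (6 * real n + 5) * (6 * real n + 7)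
         / (16 * (real n + 1) ^ 2 * (3 * real n + 1) * (3 * real n + 2)))"
    by (rule arg_cong[where f = "(*) _"], rule divide_eq_divide_by_common_factor[where c = "1/144"])
      (algebra, algebra, simp)
  finally show ?thesis .
qed

lemma harmonic_sum_Suc:
  "harmonic_sum (Suc k) = harmonic_sum k
     + (32 * (real k)^2 + 68 * real k + 35) / (36 * (2 * real k + 1)^2 * (real k + 1)^2)"
proof -
  have "1 / (2 * real (Suc k) - 1) ^ 2 - 1 / (36 * (real (Suc k)) ^ 2)
      = (32 * (real k)^2 + 68 * real k + 35) / (36 * (2 * real k + 1)^2 * (real k + 1)^2)"
    by (simp add: field_simps) algebra
  then show ?thesis unfolding harmonic_sum_def by simp
qed

lemma alternating_sum_Suc:
  "alternating_sum (Suc n)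
     = alternating_sum n + (4 * real n + 3) / (4 * (2 * real n + 1)^2 * (real n + 1)^2)"
proof -
  have "alternating_sum (Suc n) = alternating_sum n + 1 / (2 * real n + 1)^2 - 1 / (2 * real n + 2)^2"
    unfolding alternating_sum_def by (simp add: add.commute)
  also have "\<dots> = alternating_sum n + (4 * real n + 3) / (4 * (2 * real n + 1)^2 * (real n + 1)^2)"
    by (simp add: field_simps) algebra
  finally show ?thesis .
qed

section \<open>The WZ pairs\<close>

definition wz_F :: "nat \<Rightarrow> nat \<Rightarrow> real" where
  "wz_F n k = (8 * real k + 1) * ramanujan_coeff k * truncation_factor n k / closed_form n"

definition wz_E :: "nat \<Rightarrow> nat \<Rightarrow> real" where
  "wz_E n k = harmonic_sum k - alternating_sum n / 9"

definition wz_rho :: "real \<Rightarrow> real \<Rightarrow> real" where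
  "wz_rho n k = (k-n-1) * (6*n+2*k+3) * (6*n+2*k+5) * (6*n+2*k+7) * (2*n+1)^2
     / (16 * (2*n+2*k+1) * (n+1)^2 * (k-3*n-3) * (k-3*n-2) * (k-3*n-1))"

definition wz_sigma :: "real \<Rightarrow> real \<Rightarrow> real" where
  "wz_sigma m k = (8*k+9) * (2*k+1) * (4*k+1) * (4*k+3) * (2*m+2*k+1) * (k-m)
     / (32 * (8*k+1) * (k+1)^3 * (6*m+2*k+3) * (k-3*m))"

lemma wz_F_Suc_right: "wz_F m (Suc k) = wz_F m k * wz_sigma (real m) (real k)"
proof -
  define ra where
    "ra = (2 * real k + 1) * (4 * real k + 1) * (4 * real k + 3) / (32 * (real k + 1) ^ 3)"
  define rb where "rb = (2 * real m + 2 * real k + 1) * (real k - real m)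
                        / ((6 * real m + 2 * real k + 3) * (real k - 3 * real m))"
  have "wz_F m (Suc k) = wz_F m k * ((8 * real k + 9) / (8 * real k + 1) * ra * rb)"
    unfolding wz_F_def ramanujan_coeff_Suc truncation_factor_Suc ra_def[symmetric] rb_def[symmetric]
    using closed_form_pos[of m] by (simp add: field_simps add_nonneg_eq_0_iff)
  also have "(8 * real k + 9) / (8 * real k + 1) * ra * rb = wz_sigma (real m) (real k)"
    unfolding ra_def rb_def wz_sigma_def times_divide_times_eq
    by (rule divide_eq_divide_by_common_factor[where c = 1]) (algebra, algebra, simp)
  finally show ?thesis .
qed

lemma wz_F_Suc_left: "wz_F n k = wz_F (Suc n) k * wz_rho (real n) (real k)"
proof -
  define g where "g = (2 * real n + 1) ^ 2 * (6 * real n + 5) * (6 * real n + 7)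
                      / (16 * (real n + 1) ^ 2 * (3 * real n + 1) * (3 * real n + 2))"
  have "g \<noteq> 0" unfolding g_def by simp
  then have "wz_F n k = wz_F (Suc n) k * (g * truncation_ratio (real n) (real k))"
    unfolding wz_F_def closed_form_Suc truncation_factor_Suc_left[of n k] g_def[symmetric]
    using closed_form_pos[of n] by (simp add: field_simps add_pos_nonneg)
  also have "g * truncation_ratio (real n) (real k) = wz_rho (real n) (real k)"
    unfolding g_def truncation_ratio_def wz_rho_def times_divide_times_eq
    by (rule divide_eq_divide_by_common_factor[where
          c = "- (2 * real n + 1) * (3 * real n + 1) * (3 * real n + 2) * (3 * real n + 3)
               * (6 * real n + 5) * (6 * real n + 7) / 16"]) (algebra, algebra, simp)
  finally show ?thesis .
qed

definition wz_R :: "real \<Rightarrow> real \<Rightarrow> real" where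
  "wz_R n k = 2 * k^3 * (4*n+3) * (6*n+7 - 12*(n+1)*k - 4*k^2)
     / ((8*k+1) * (n+1)^2 * (3*n+3-k) * (3*n+2-k) * (2*n+2*k+1))"

definition wz_S :: "real \<Rightarrow> real \<Rightarrow> real" where
  "wz_S n k = k * ((-42 - 176*n - 274*n^2 - 188*n^3 - 48*n^4)
                   + k * (72 + 312*n + 504*n^2 + 360*n^3 + 96*n^4)
                   + k^2 * (66 + 172*n + 136*n^2 + 32*n^3)
                   + k^3 * (-72 - 168*n - 96*n^2)
                   + k^4 * (-24 - 32*n))
     / (36 * (8*k+1) * (n+1)^4 * (3*n+3-k) * (3*n+2-k) * (2*n+2*k+1))"

text \<open>
  Divided by F(n+1,k), the two WZ relations become the following identities between rational
  functions of n and k; each is checked by clearing a common denominator D term by term.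
  The factor k - 3n - 1 of D vanishes at n = 0, k = 1, which is why the summation starts at n = 1.
\<close>

lemma wz_certificate:
  fixes n k :: real
  assumes "1 \<le> n" "0 \<le> k" "k \<le> n + 1"
  shows "1 - wz_rho n k = wz_sigma (n + 1) k * wz_R n (k + 1) - wz_R n k"
proof -
  define D where
    "D = 16 * (8*k+1) * (n+1)^2 * (2*n+2*k+1) * (k-3*n-3) * (k-3*n-2) * (k-3*n-1) * (6*n+2*k+9)"
  have "D \<noteq> 0" unfolding D_def using assms by (simp add: mult_eq_0_iff)
  have rho: "wz_rho n k * D
      = ((k-n-1) * (6*n+2*k+3) * (6*n+2*k+5) * (6*n+2*k+7) * (2*n+1)^2) * ((8*k+1) * (6*n+2*k+9))"
    unfolding wz_rho_def
    by (rule divide_mult_eq_by_cofactor[where g = 1])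
      (algebra, unfold D_def, algebra, simp, use assms in \<open>simp add: mult_eq_0_iff\<close>)
  have sigma_R: "wz_sigma (n + 1) k * wz_R n (k + 1) * D
      = ((2*k+1) * (4*k+1) * (4*k+3) * (k-n-1) * (4*n+3) * (6*n+7 - 12*(n+1)*(k+1) - 4*(k+1)^2))
        * (2*n+2*k+1)"
    unfolding wz_sigma_def wz_R_def times_divide_times_eq
    by (rule divide_mult_eq_by_cofactor[where g = "2 * (8*k+9) * (2*n+2*k+3) * (k+1)^3"])
      (algebra, unfold D_def, algebra, use assms in \<open>simp_all add: mult_eq_0_iff\<close>)
  have R: "wz_R n k * D
      = (2 * k^3 * (4*n+3) * (6*n+7 - 12*(n+1)*k - 4*k^2)) * (16 * (k-3*n-1) * (6*n+2*k+9))"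
    unfolding wz_R_def
    by (rule divide_mult_eq_by_cofactor[where g = 1])
      (algebra, unfold D_def, algebra, simp, use assms in \<open>simp add: mult_eq_0_iff\<close>)
  have "(1 - wz_rho n k - (wz_sigma (n + 1) k * wz_R n (k + 1) - wz_R n k)) * D
      = D - wz_rho n k * D - wz_sigma (n + 1) k * wz_R n (k + 1) * D + wz_R n k * D"
    by algebra
  also have "\<dots> = 0"
    unfolding rho sigma_R R unfolding D_def by algebra
  finally show ?thesis using \<open>D \<noteq> 0\<close> by simp
qed

lemma wz_certificate_weighted:
  fixes n k :: real
  assumes "1 \<le> n" "0 \<le> k" "k \<le> n + 1"
  shows "wz_rho n k * ((4*n+3) / (36 * (2*n+1)^2 * (n+1)^2))
       = wz_sigma (n + 1) k * (wz_S n (k + 1)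
           - wz_R n (k + 1) * ((32*k^2 + 68*k + 35) / (36 * (2*k+1)^2 * (k+1)^2)))
         - wz_S n k"
proof -
  define D where "D = 1152 * (8*k+1) * (n+1)^4 * (2*n+2*k+1) * (k-3*n-3) * (k-3*n-2) * (k-3*n-1)
                        * (6*n+2*k+9) * (2*k+1) * (k+1)^2"
  have "D \<noteq> 0" unfolding D_def using assms by (simp add: mult_eq_0_iff)
  have rho: "wz_rho n k * ((4*n+3) / (36 * (2*n+1)^2 * (n+1)^2)) * D
      = ((k-n-1) * (6*n+2*k+3) * (6*n+2*k+5) * (6*n+2*k+7) * (4*n+3))
        * (2 * (8*k+1) * (6*n+2*k+9) * (2*k+1) * (k+1)^2)"
    unfolding wz_rho_def times_divide_times_eq
    by (rule divide_mult_eq_by_cofactor[where g = "(2*n+1)^2"])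
      (algebra, unfold D_def, algebra, use assms in \<open>simp_all add: mult_eq_0_iff\<close>)
  have sigma_S: "wz_sigma (n + 1) k * wz_S n (k + 1) * D
      = ((2*k+1) * (4*k+1) * (4*k+3) * (k-n-1)
         * ((-42 - 176*n - 274*n^2 - 188*n^3 - 48*n^4)
            + (k+1) * (72 + 312*n + 504*n^2 + 360*n^3 + 96*n^4)
            + (k+1)^2 * (66 + 172*n + 136*n^2 + 32*n^3)
            + (k+1)^3 * (-72 - 168*n - 96*n^2)
            + (k+1)^4 * (-24 - 32*n)))
        * ((2*n+2*k+1) * (2*k+1))"
    unfolding wz_sigma_def wz_S_def times_divide_times_eq
    by (rule divide_mult_eq_by_cofactor[where g = "(8*k+9) * (2*n+2*k+3) * (k+1)"])
      (algebra, unfold D_def, algebra, use assms in \<open>simp_all add: mult_eq_0_iff\<close>)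
  have sigma_R: "wz_sigma (n + 1) k * wz_R n (k + 1)
        * ((32*k^2 + 68*k + 35) / (36 * (2*k+1)^2 * (k+1)^2)) * D
      = ((4*k+1) * (4*k+3) * (k-n-1) * (4*n+3) * (6*n+7 - 12*(n+1)*(k+1) - 4*(k+1)^2)
         * (32*k^2 + 68*k + 35))
        * (2 * (n+1)^2 * (2*n+2*k+1))"
    unfolding wz_sigma_def wz_R_def times_divide_times_eq
    by (rule divide_mult_eq_by_cofactor[where g = "2 * (8*k+9) * (2*k+1) * (2*n+2*k+3) * (k+1)^3"])
      (algebra, unfold D_def, algebra, use assms in \<open>simp_all add: mult_eq_0_iff\<close>)
  have S: "wz_S n k * D
      = (k * ((-42 - 176*n - 274*n^2 - 188*n^3 - 48*n^4)
              + k * (72 + 312*n + 504*n^2 + 360*n^3 + 96*n^4)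
              + k^2 * (66 + 172*n + 136*n^2 + 32*n^3)
              + k^3 * (-72 - 168*n - 96*n^2)
              + k^4 * (-24 - 32*n)))
        * (32 * (k-3*n-1) * (6*n+2*k+9) * (2*k+1) * (k+1)^2)"
    unfolding wz_S_def
    by (rule divide_mult_eq_by_cofactor[where g = 1])
      (algebra, unfold D_def, algebra, simp, use assms in \<open>simp add: mult_eq_0_iff\<close>)
  let ?h = "(32*k^2 + 68*k + 35) / (36 * (2*k+1)^2 * (k+1)^2)"
  have "(wz_rho n k * ((4*n+3) / (36 * (2*n+1)^2 * (n+1)^2))
         - (wz_sigma (n + 1) k * (wz_S n (k + 1) - wz_R n (k + 1) * ?h) - wz_S n k)) * D
      = wz_rho n k * ((4*n+3) / (36 * (2*n+1)^2 * (n+1)^2)) * D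
        - wz_sigma (n + 1) k * wz_S n (k + 1) * D
        + wz_sigma (n + 1) k * wz_R n (k + 1) * ?h * D + wz_S n k * D"
    by algebra
  also have "\<dots> = 0"
    unfolding rho sigma_S sigma_R S unfolding D_def by algebra
  finally show ?thesis using \<open>D \<noteq> 0\<close> by simp
qed

definition wz_G :: "nat \<Rightarrow> nat \<Rightarrow> real" where
  "wz_G n k = wz_F (Suc n) k * wz_R (real n) (real k)"

definition wz_G_weighted :: "nat \<Rightarrow> nat \<Rightarrow> real" where
  "wz_G_weighted n k
     = wz_F (Suc n) k * (wz_R (real n) (real k) * wz_E (Suc n) k - wz_S (real n) (real k))"

lemma wz_pair:
  assumes "1 \<le> n" "k \<le> Suc n"
  shows "wz_F (Suc n) k - wz_F n k = wz_G n (Suc k) - wz_G n k"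
proof -
  have cert: "wz_sigma (1 + real n) (real k) * wz_R (real n) (1 + real k) - wz_R (real n) (real k)
      = 1 - wz_rho (real n) (real k)"
    using wz_certificate[of "real n" "real k"] assms by (simp add: add.commute)
  have "wz_G n (Suc k) - wz_G n k
      = wz_F (Suc n) k
        * (wz_sigma (1 + real n) (real k) * wz_R (real n) (1 + real k) - wz_R (real n) (real k))"
    unfolding wz_G_def wz_F_Suc_right by (simp add: algebra_simps)
  also have "\<dots> = wz_F (Suc n) k - wz_F n k"
    unfolding cert wz_F_Suc_left[of n k] by (simp add: algebra_simps)
  finally show ?thesis ..
qed

lemma wz_pair_weighted:
  assumes "1 \<le> n" "k \<le> Suc n"
  shows "wz_F (Suc n) k * wz_E (Suc n) k - wz_F n k * wz_E n k
       = wz_G_weighted n (Suc k) - wz_G_weighted n k"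
proof -
  let ?\<delta> = "(4 * real n + 3) / (36 * (2 * real n + 1)^2 * (real n + 1)^2)"
  let ?h = "(32 * (real k)^2 + 68 * real k + 35) / (36 * (2 * real k + 1)^2 * (real k + 1)^2)"
  let ?\<sigma> = "wz_sigma (1 + real n) (real k)"
  have E_left: "wz_E n k = wz_E (Suc n) k + ?\<delta>"
    unfolding wz_E_def alternating_sum_Suc by (simp add: field_simps)
  have E_right: "wz_E (Suc n) (Suc k) = wz_E (Suc n) k + ?h"
    unfolding wz_E_def harmonic_sum_Suc by simp
  have cert: "?\<sigma> * wz_R (real n) (1 + real k) - wz_R (real n) (real k)
      = 1 - wz_rho (real n) (real k)"
    using wz_certificate[of "real n" "real k"] assms by (simp add: add.commute)
  have cert_weighted: "?\<sigma> * (wz_S (real n) (1 + real k) - wz_R (real n) (1 + real k) * ?h)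
        - wz_S (real n) (real k)
      = wz_rho (real n) (real k) * ?\<delta>"
    using wz_certificate_weighted[of "real n" "real k"] assms by (simp add: add.commute)
  have "wz_G_weighted n (Suc k) - wz_G_weighted n k
      = wz_F (Suc n) k
        * (wz_E (Suc n) k * (?\<sigma> * wz_R (real n) (1 + real k) - wz_R (real n) (real k))
           - (?\<sigma> * (wz_S (real n) (1 + real k) - wz_R (real n) (1 + real k) * ?h)
              - wz_S (real n) (real k)))"
    unfolding wz_G_weighted_def wz_F_Suc_right E_right by (simp add: algebra_simps)
  also have "\<dots> = wz_F (Suc n) k * wz_E (Suc n) k - wz_F n k * wz_E n k"
    unfolding cert cert_weighted wz_F_Suc_left[of n k] E_left by (simp add: algebra_simps)
  finally show ?thesis ..
qed

lemma wz_F_vanishes: "wz_F n (Suc n) = 0"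
  unfolding wz_F_def truncation_factor_def by (simp add: pochhammer_of_nat_eq_0_iff)

lemma wz_G_vanishes:
  "wz_G n 0 = 0" "wz_G n (Suc (Suc n)) = 0"
  "wz_G_weighted n 0 = 0" "wz_G_weighted n (Suc (Suc n)) = 0"
  unfolding wz_G_def wz_G_weighted_def wz_R_def wz_S_def by (simp_all add: wz_F_vanishes)

lemma wz_values_at_one:
  "wz_F 1 0 = 32/35" "wz_F 1 1 = 3/35" "wz_E 1 0 = -1/12" "wz_E 1 1 = 8/9"
  unfolding wz_F_def ramanujan_coeff_def truncation_factor_def closed_form_def
    wz_E_def harmonic_sum_def alternating_sum_def
  by (simp_all add: power2_eq_square numeral_2_eq_2)

lemma sum_wz_F:
  assumes "1 \<le> n"
  shows "(\<Sum>k\<le>n. wz_F n k) = 1"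
  using assms
proof (induction n rule: nat_induct_at_least)
  case base
  then show ?case by (simp add: wz_values_at_one[unfolded One_nat_def])
next
  case (Suc n)
  have "(\<Sum>k\<le>Suc n. wz_F (Suc n) k) = (\<Sum>k\<le>n. wz_F n k)"
    by (rule sum_atMost_Suc_eq_by_telescoping[where h = "wz_G n"])
      (fact wz_pair[OF Suc.hyps], simp_all add: wz_F_vanishes wz_G_vanishes)
  with Suc.IH show ?case by simp
qed

lemma sum_wz_F_wz_E:
  assumes "1 \<le> n"
  shows "(\<Sum>k\<le>n. wz_F n k * wz_E n k) = 0"
  using assms
proof (induction n rule: nat_induct_at_least)
  case base
  then show ?case by (simp add: wz_values_at_one[unfolded One_nat_def])
next
  case (Suc n)
  have "(\<Sum>k\<le>Suc n. wz_F (Suc n) k * wz_E (Suc n) k) = (\<Sum>k\<le>n. wz_F n k * wz_E n k)"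
    by (rule sum_atMost_Suc_eq_by_telescoping[where h = "wz_G_weighted n"])
      (fact wz_pair_weighted[OF Suc.hyps], simp_all add: wz_F_vanishes wz_G_vanishes)
  with Suc.IH show ?case by simp
qed

lemma sum_harmonic_closed_form:
  assumes "1 \<le> n"
  shows "(\<Sum>k=1..n. (8 * real k + 1) * ramanujan_coeff k * truncation_factor n k * harmonic_sum k)
       = 1/9 * closed_form n * alternating_sum n"
proof -
  have "(8 * real k + 1) * ramanujan_coeff k * truncation_factor n k * harmonic_sum k
      = closed_form n * (wz_F n k * wz_E n k + alternating_sum n / 9 * wz_F n k)" for k
    unfolding wz_F_def wz_E_def using closed_form_pos[of n] by (simp add: field_simps)
  then have "(\<Sum>k\<le>n. (8 * real k + 1) * ramanujan_coeff k * truncation_factor n k * harmonic_sum k)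
      = (\<Sum>k\<le>n. closed_form n * (wz_F n k * wz_E n k + alternating_sum n / 9 * wz_F n k))"
    by simp
  also have "\<dots> = closed_form n
      * ((\<Sum>k\<le>n. wz_F n k * wz_E n k) + alternating_sum n / 9 * (\<Sum>k\<le>n. wz_F n k))"
    by (simp only: sum_distrib_left[symmetric] sum.distrib)
  also have "\<dots> = 1/9 * closed_form n * alternating_sum n"
    using sum_wz_F[OF assms] sum_wz_F_wz_E[OF assms] by simp
  finally show ?thesis
    by (simp add: atMost_atLeast0 sum.atLeast_Suc_atMost harmonic_sum_def)
qed

theorem mainTheorem8:
  fixes n :: nat
  assumes "n \<ge> 1"
  shows "(\<Sum>k=1..n. (8 * real k + 1)
           * (pochhammer (1/2) k * pochhammer (1/4) k * pochhammer (3/4) k / (fact k) ^ 3)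
           * (pochhammer (1/2 + real n) k * pochhammer (- real n) k
              / (pochhammer (3/2 + 3 * real n) k * pochhammer (- 3 * real n) k))
           * (\<Sum>i=1..k. 1 / (2 * real i - 1) ^ 2 - 1 / (36 * (real i) ^ 2)))
       = (1/9) * ((pochhammer (1/2) n) ^ 2 * pochhammer (5/6) n * pochhammer (7/6) n
                  / ((fact n) ^ 2 * pochhammer (1/3) n * pochhammer (2/3) n))
           * (\<Sum>j=1..2*n. (-1) ^ (j - 1) / (real j) ^ 2)"
  using sum_harmonic_closed_form[OF assms]
  unfolding ramanujan_coeff_def truncation_factor_def harmonic_sum_def
    closed_form_def alternating_sum_def .

end
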